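(* Let $(A,\mathcal H)$ be a left bialgebroid. For every right $\mathcal H$-comodule $A^o$-subring $B$ of $\mathcal H$ via $t$, the set $\mathcal HB^+$ is a left ideal two-sided coideal of $\mathcal H$, and the assignment $B\mapsto\mathcal HB^+$ is inclusion-preserving.
   Context: $\Bbbk$ is a field. A left bialgebroid $(A,\mathcal H)$: $\Bbbk$-algebras $A,\mathcal H$, algebra maps $s:A\to\mathcal H$, $t:A^o\to\mathcal H$ with commuting images, $A$-bilinear $\Delta:\mathcal H\to\mathcal H\otimes_A\mathcal H$, $\varepsilon:\mathcal H\to A$ (bimodule structure $a\cdot h\cdot b=s(a)t(b)h$; $\mathcal H\otimes_A\mathcal H$ = quotient of $\mathcal H\otimes\mathcal H$ by span of $t(a)x\otimes y-x\otimes s(a)y$), with $(\mathcal H,\Delta,\varepsilon)$ a coassociative counital $A$-coring, $\Delta$ an algebra map into the Takeuchi product $\{\sum x_i\otimes_Ay_i:\sum x_it(a)\otimes_Ay_i=\sum x_i\otimes_Ay_is(a)\ \forall a\}$, $\varepsilon(xs(\varepsilon(y)))=\varepsilon(xy)=\varepsilon(xt(\varepsilon(y)))$, $\varepsilon(1)=1$. $\mathcal H^+=\ker\varepsilon$, $B^+=B\cap\mathcal H^+$. Right $\mathcal H$-comodule $A^o$-subring via $t$: subalgebra $B\supseteq t(A)$ with a coassociative counital right $A$-linear coaction $\delta:B\to B\otimes_A\mathcal H$ ($b\cdot a=t(a)b$; $\mathcal H$ left via $s$) such that $(\iota\otimes_A\mathcal H)\delta=\Delta\iota$, $\iota$ the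 inclusion. Left ideal two-sided coideal: left ideal $I$ with $\varepsilon(I)=0$ and $\Delta(I)\subseteq$ image of $I\otimes_A\mathcal H+\mathcal H\otimes_AI$ in $\mathcal H\otimes_A\mathcal H$. *)

theory Defs
  imports "HOL-Library.Poly_Mapping"
begin

text \<open>
  A k-algebra is modelled as a type of class ring_1 together with a ring homomorphism
  from the field k into its centre (the structure map c to c 1).
  Elements of balanced tensor products M (x)_A N are modelled by formal Z-linear
  combinations of pairs (finitely supported maps pairs to int, i.e. frag) modulo the
  additive subgroup generated by the bi-additivity and A-balancing relations.  Because the
  A-actions restrict to the k-actions, this is canonically the same as the paper's quotient
  of M (x)_k N.  A map into a tensor product is given by choosing representatives.
\<close>

definition k_algebra :: "('k::field \<Rightarrow> 'r::ring_1) \<Rightarrow> bool" where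
  "k_algebra e \<longleftrightarrow> e 1 = 1 \<and> (\<forall>c d. e (c + d) = e c + e d) \<and> (\<forall>c d. e (c * d) = e c * e d)
     \<and> (\<forall>c x. e c * x = x * e c)"

definition alg_map :: "('k::field \<Rightarrow> 'a::ring_1) \<Rightarrow> ('k \<Rightarrow> 'h::ring_1) \<Rightarrow> ('a \<Rightarrow> 'h) \<Rightarrow> bool" where
  "alg_map eA eH f \<longleftrightarrow> f 1 = 1 \<and> (\<forall>x y. f (x + y) = f x + f y) \<and> (\<forall>x y. f (x * y) = f x * f y)
     \<and> (\<forall>c. f (eA c) = eH c)"

definition alg_map_op :: "('k::field \<Rightarrow> 'a::ring_1) \<Rightarrow> ('k \<Rightarrow> 'h::ring_1) \<Rightarrow> ('a \<Rightarrow> 'h) \<Rightarrow> bool" where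
  "alg_map_op eA eH f \<longleftrightarrow> f 1 = 1 \<and> (\<forall>x y. f (x + y) = f x + f y) \<and> (\<forall>x y. f (x * y) = f y * f x)
     \<and> (\<forall>c. f (eA c) = eH c)"

inductive_set addgen :: "'g::ab_group_add set \<Rightarrow> 'g set" for R where
  zero: "0 \<in> addgen R"
| gen: "r \<in> R \<Longrightarrow> r \<in> addgen R"
| diff: "u \<in> addgen R \<Longrightarrow> v \<in> addgen R \<Longrightarrow> u - v \<in> addgen R"

text \<open>Relations of M (x)_A N for subsets M, N of H; M is a right A-module via
  m.a = t(a) m and N a left A-module via a.n = s(a) n.\<close>
definition tens2_rels :: "('a \<Rightarrow> 'h::ring_1) \<Rightarrow> ('a \<Rightarrow> 'h) \<Rightarrow> 'h set \<Rightarrow> 'h set \<Rightarrow> ('h \<times> 'h \<Rightarrow>\<^sub>0 int) set" where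
  "tens2_rels s t M N =
     {frag_of (x + x', y) - frag_of (x, y) - frag_of (x', y) | x x' y. x \<in> M \<and> x' \<in> M \<and> y \<in> N}
   \<union> {frag_of (x, y + y') - frag_of (x, y) - frag_of (x, y') | x y y'. x \<in> M \<and> y \<in> N \<and> y' \<in> N}
   \<union> {frag_of (t a * x, y) - frag_of (x, s a * y) | a x y. x \<in> M \<and> y \<in> N}"

definition tens2_eq :: "('a \<Rightarrow> 'h::ring_1) \<Rightarrow> ('a \<Rightarrow> 'h) \<Rightarrow> 'h set \<Rightarrow> 'h set
     \<Rightarrow> ('h \<times> 'h \<Rightarrow>\<^sub>0 int) \<Rightarrow> ('h \<times> 'h \<Rightarrow>\<^sub>0 int) \<Rightarrow> bool" where
  "tens2_eq s t M N u v \<longleftrightarrow> Poly_Mapping.keys u \<subseteq> M \<times> N \<and> Poly_Mapping.keys v \<subseteq> M \<times> N \<and> u - v \<in> addgen (tens2_rels s t M N)"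

text \<open>Relations of the iterated tensor product M (x)_A H (x)_A H (middle factor an
  A-bimodule: left via s, right via t).\<close>
definition tens3_rels :: "('a \<Rightarrow> 'h::ring_1) \<Rightarrow> ('a \<Rightarrow> 'h) \<Rightarrow> 'h set \<Rightarrow> ('h \<times> 'h \<times> 'h \<Rightarrow>\<^sub>0 int) set" where
  "tens3_rels s t M =
     {frag_of (x + x', y, z) - frag_of (x, y, z) - frag_of (x', y, z) | x x' y z. x \<in> M \<and> x' \<in> M}
   \<union> {frag_of (x, y + y', z) - frag_of (x, y, z) - frag_of (x, y', z) | x y y' z. x \<in> M}
   \<union> {frag_of (x, y, z + z') - frag_of (x, y, z) - frag_of (x, y, z') | x y z z'. x \<in> M}
   \<union> {frag_of (t a * x, y, z) - frag_of (x, s a * y, z) | a x y z. x \<in> M}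
   \<union> {frag_of (x, t a * y, z) - frag_of (x, y, s a * z) | a x y z. x \<in> M}"

definition tens3_eq :: "('a \<Rightarrow> 'h::ring_1) \<Rightarrow> ('a \<Rightarrow> 'h) \<Rightarrow> 'h set
     \<Rightarrow> ('h \<times> 'h \<times> 'h \<Rightarrow>\<^sub>0 int) \<Rightarrow> ('h \<times> 'h \<times> 'h \<Rightarrow>\<^sub>0 int) \<Rightarrow> bool" where
  "tens3_eq s t M u v \<longleftrightarrow> Poly_Mapping.keys u \<subseteq> M \<times> UNIV \<times> UNIV \<and> Poly_Mapping.keys v \<subseteq> M \<times> UNIV \<times> UNIV
     \<and> u - v \<in> addgen (tens3_rels s t M)"

definition fsum :: "('b \<Rightarrow> 'h::ring_1) \<Rightarrow> ('b \<Rightarrow>\<^sub>0 int) \<Rightarrow> 'h" where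
  "fsum f u = (\<Sum>i\<in>Poly_Mapping.keys u. of_int (Poly_Mapping.lookup u i) * f i)"

text \<open>Maps (f (x) H) and (H (x) f) on representatives, and the product of representatives.\<close>
definition ext_left :: "('h \<Rightarrow> ('h \<times> 'h \<Rightarrow>\<^sub>0 int)) \<Rightarrow> ('h \<times> 'h \<Rightarrow>\<^sub>0 int) \<Rightarrow> ('h \<times> 'h \<times> 'h \<Rightarrow>\<^sub>0 int)" where
  "ext_left f u = frag_extend (\<lambda>(x, y). frag_extend (\<lambda>(p, q). frag_of (p, q, y)) (f x)) u"

definition ext_right :: "('h \<Rightarrow> ('h \<times> 'h \<Rightarrow>\<^sub>0 int)) \<Rightarrow> ('h \<times> 'h \<Rightarrow>\<^sub>0 int) \<Rightarrow> ('h \<times> 'h \<times> 'h \<Rightarrow>\<^sub>0 int)" where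
  "ext_right f u = frag_extend (\<lambda>(x, y). frag_extend (\<lambda>(p, q). frag_of (x, p, q)) (f y)) u"

definition tmap :: "('h \<times> 'h \<Rightarrow> 'h \<times> 'h) \<Rightarrow> ('h \<times> 'h \<Rightarrow>\<^sub>0 int) \<Rightarrow> ('h \<times> 'h \<Rightarrow>\<^sub>0 int)" where
  "tmap g u = frag_extend (\<lambda>z. frag_of (g z)) u"

definition tmult :: "('h::ring_1 \<times> 'h \<Rightarrow>\<^sub>0 int) \<Rightarrow> ('h \<times> 'h \<Rightarrow>\<^sub>0 int) \<Rightarrow> ('h \<times> 'h \<Rightarrow>\<^sub>0 int)" where
  "tmult u v = frag_extend (\<lambda>(x, y). frag_extend (\<lambda>(x', y'). frag_of (x * x', y * y')) v) u"

definition left_bialgebroid ::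
  "('k::field \<Rightarrow> 'a::ring_1) \<Rightarrow> ('k \<Rightarrow> 'h::ring_1) \<Rightarrow> ('a \<Rightarrow> 'h) \<Rightarrow> ('a \<Rightarrow> 'h)
   \<Rightarrow> ('h \<Rightarrow> ('h \<times> 'h \<Rightarrow>\<^sub>0 int)) \<Rightarrow> ('h \<Rightarrow> 'a) \<Rightarrow> bool" where
  "left_bialgebroid eA eH s t \<Delta> \<epsilon> \<longleftrightarrow>
     k_algebra eA \<and> k_algebra eH \<and> alg_map eA eH s \<and> alg_map_op eA eH t
   \<and> (\<forall>a b. s a * t b = t b * s a)
   \<comment> \<open>Delta is A-bilinear (additive and compatible with the A-bimodule structures)\<close>
   \<and> (\<forall>x y. tens2_eq s t UNIV UNIV (\<Delta> (x + y)) (\<Delta> x + \<Delta> y))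
   \<and> (\<forall>a b h. tens2_eq s t UNIV UNIV (\<Delta> (s a * t b * h))
                 (tmap (\<lambda>(x, y). (s a * x, t b * y)) (\<Delta> h)))
   \<comment> \<open>epsilon is A-bilinear\<close>
   \<and> (\<forall>x y. \<epsilon> (x + y) = \<epsilon> x + \<epsilon> y)
   \<and> (\<forall>a b h. \<epsilon> (s a * t b * h) = a * \<epsilon> h * b)
   \<comment> \<open>coassociativity and counitality\<close>
   \<and> (\<forall>h. tens3_eq s t UNIV (ext_left \<Delta> (\<Delta> h)) (ext_right \<Delta> (\<Delta> h)))
   \<and> (\<forall>h. fsum (\<lambda>(x, y). s (\<epsilon> x) * y) (\<Delta> h) = h)
   \<and> (\<forall>h. fsum (\<lambda>(x, y). t (\<epsilon> y) * x) (\<Delta> h) = h)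
   \<comment> \<open>Delta lands in the Takeuchi product and is an algebra map into it\<close>
   \<and> (\<forall>h a. tens2_eq s t UNIV UNIV (tmap (\<lambda>(x, y). (x * t a, y)) (\<Delta> h))
                                    (tmap (\<lambda>(x, y). (x, y * s a)) (\<Delta> h)))
   \<and> (\<forall>x y. tens2_eq s t UNIV UNIV (\<Delta> (x * y)) (tmult (\<Delta> x) (\<Delta> y)))
   \<and> tens2_eq s t UNIV UNIV (\<Delta> 1) (frag_of (1, 1))
   \<comment> \<open>counit axioms\<close>
   \<and> (\<forall>x y. \<epsilon> (x * s (\<epsilon> y)) = \<epsilon> (x * y) \<and> \<epsilon> (x * y) = \<epsilon> (x * t (\<epsilon> y)))
   \<and> \<epsilon> 1 = 1"

definition k_subalgebra :: "('k \<Rightarrow> 'h::ring_1) \<Rightarrow> 'h set \<Rightarrow> bool" where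
  "k_subalgebra eH B \<longleftrightarrow> 0 \<in> B \<and> 1 \<in> B \<and> (\<forall>x\<in>B. \<forall>y\<in>B. x + y \<in> B \<and> x - y \<in> B \<and> x * y \<in> B)
     \<and> (\<forall>c. \<forall>x\<in>B. eH c * x \<in> B)"

text \<open>Right H-comodule A^o-subring of H via t.  B is a right A-module by b.a = t(a) b;
  the coaction delta : B to B (x)_A H is given by representatives supported on B x H.\<close>
definition right_comodule_subring ::
  "('k::field \<Rightarrow> 'h::ring_1) \<Rightarrow> ('a \<Rightarrow> 'h) \<Rightarrow> ('a \<Rightarrow> 'h)
   \<Rightarrow> ('h \<Rightarrow> ('h \<times> 'h \<Rightarrow>\<^sub>0 int)) \<Rightarrow> ('h \<Rightarrow> 'a) \<Rightarrow> 'h set \<Rightarrow> bool" where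
  "right_comodule_subring eH s t \<Delta> \<epsilon> B \<longleftrightarrow>
     k_subalgebra eH B \<and> range t \<subseteq> B \<and>
     (\<exists>\<delta>. (\<forall>b\<in>B. Poly_Mapping.keys (\<delta> b) \<subseteq> B \<times> UNIV)
        \<comment> \<open>right A-linearity\<close>
        \<and> (\<forall>b\<in>B. \<forall>b'\<in>B. tens2_eq s t B UNIV (\<delta> (b + b')) (\<delta> b + \<delta> b'))
        \<and> (\<forall>a. \<forall>b\<in>B. tens2_eq s t B UNIV (\<delta> (t a * b)) (tmap (\<lambda>(x, y). (x, t a * y)) (\<delta> b)))
        \<comment> \<open>coassociativity in B (x)_A H (x)_A H and counitality\<close>
        \<and> (\<forall>b\<in>B. tens3_eq s t B (ext_left \<delta> (\<delta> b)) (ext_right \<Delta> (\<delta> b)))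
        \<and> (\<forall>b\<in>B. fsum (\<lambda>(x, y). t (\<epsilon> y) * x) (\<delta> b) = b)
        \<comment> \<open>(iota (x) H) delta = Delta iota\<close>
        \<and> (\<forall>b\<in>B. tens2_eq s t UNIV UNIV (\<delta> b) (\<Delta> b)))"

definition left_ideal :: "'h::ring_1 set \<Rightarrow> bool" where
  "left_ideal I \<longleftrightarrow> 0 \<in> I \<and> (\<forall>x\<in>I. \<forall>y\<in>I. x + y \<in> I \<and> x - y \<in> I) \<and> (\<forall>h. \<forall>x\<in>I. h * x \<in> I)"

definition left_ideal_two_sided_coideal ::
  "('a \<Rightarrow> 'h::ring_1) \<Rightarrow> ('a \<Rightarrow> 'h) \<Rightarrow> ('h \<Rightarrow> ('h \<times> 'h \<Rightarrow>\<^sub>0 int)) \<Rightarrow> ('h \<Rightarrow> 'a::ring_1) \<Rightarrow> 'h set \<Rightarrow> bool" where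
  "left_ideal_two_sided_coideal s t \<Delta> \<epsilon> I \<longleftrightarrow>
     left_ideal I \<and> (\<forall>x\<in>I. \<epsilon> x = 0) \<and>
     (\<forall>x\<in>I. \<exists>v. Poly_Mapping.keys v \<subseteq> (I \<times> UNIV) \<union> (UNIV \<times> I) \<and> tens2_eq s t UNIV UNIV (\<Delta> x) v)"

text \<open>B^+ = B \<inter> ker epsilon, and H B^+ = set of finite sums of products h b with b in B^+.\<close>
definition plus_part :: "('h \<Rightarrow> 'a::zero) \<Rightarrow> 'h set \<Rightarrow> 'h set" where
  "plus_part \<epsilon> B = {b \<in> B. \<epsilon> b = 0}"

definition left_gen :: "'h::ring_1 set \<Rightarrow> 'h set" where
  "left_gen X = {x. \<exists>n h b. (\<forall>i<n. b i \<in> X) \<and> x = (\<Sum>i<(n::nat). h i * b i)}"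

end

theory Submission
  imports Defs
begin

text \<open>
  For \<open>b \<in> B\<^sup>+\<close> the coaction writes \<open>\<Delta> b = \<Sum> b\<^sub>0 \<otimes> b\<^sub>1\<close> with all
  \<open>b\<^sub>0 \<in> B\<close>.  Splitting \<open>b\<^sub>0 = (b\<^sub>0 - t (\<epsilon> b\<^sub>0)) + t (\<epsilon> b\<^sub>0)\<close>, the first
  summand lies in \<open>B\<^sup>+\<close> because \<open>\<epsilon> \<circ> t = id\<close>, and the second one can be moved across
  the balanced tensor sign as \<open>s (\<epsilon> b\<^sub>0)\<close>, where the counit axiom collapses it to
  \<open>1 \<otimes> b\<close>.  Hence \<open>\<Delta> b \<in> B\<^sup>+ \<otimes> H + H \<otimes> B\<^sup>+\<close>.  Multiplicativity of \<open>\<Delta>\<close>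
  into the Takeuchi product, which acts on \<open>H \<otimes>\<^sub>A H\<close> by left multiplication, and the
  identity \<open>\<epsilon> (h b) = \<epsilon> (h t (\<epsilon> b))\<close> carry both properties over to the left ideal
  \<open>H B\<^sup>+\<close>.
\<close>

lemma addgen_add: "u \<in> addgen R \<Longrightarrow> v \<in> addgen R \<Longrightarrow> u + v \<in> addgen R"
  using addgen.diff[of u R "0 - v"] addgen.diff[OF addgen.zero, of v R] by simp

lemma addgen_uminus: "u \<in> addgen R \<Longrightarrow> - u \<in> addgen R"
  using addgen.diff[OF addgen.zero, of u R] by simp

lemma frag_extend_fun_add: "frag_extend (\<lambda>z. f z + g z) u = frag_extend f u + frag_extend g u"
  using subset_UNIV by (induction u rule: frag_induction) (auto simp: frag_extend_diff)

lemma frag_extend_fun_diff: "frag_extend (\<lambda>z. f z - g z) u = frag_extend f u - frag_extend g u"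
  using subset_UNIV by (induction u rule: frag_induction) (auto simp: frag_extend_diff)

lemma fsum_superset:
  assumes "finite S" "Poly_Mapping.keys u \<subseteq> S"
  shows "fsum f u = (\<Sum>i\<in>S. of_int (Poly_Mapping.lookup u i) * f i)"
  unfolding fsum_def by (rule sum.mono_neutral_left) (use assms in \<open>auto simp: in_keys_iff\<close>)

lemma fsum_zero [simp]: "fsum f 0 = 0"
  by (simp add: fsum_def)

lemma fsum_frag_of [simp]: "fsum f (frag_of x) = f x"
  by (simp add: fsum_def)

lemma fsum_diff: "fsum f (u - v) = fsum f u - fsum f v"
proof -
  let ?S = "Poly_Mapping.keys u \<union> Poly_Mapping.keys v"
  have "fsum f (u - v) = (\<Sum>i\<in>?S. of_int (Poly_Mapping.lookup (u - v) i) * f i)"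
    by (rule fsum_superset) (auto simp: keys_diff)
  also have "\<dots> = fsum f u - fsum f v"
    by (simp add: lookup_minus left_diff_distrib sum_subtractf fsum_superset[of ?S])
  finally show ?thesis .
qed

lemma tmult_frag_of_frag_of [simp]: "tmult (frag_of (p, q)) (frag_of (x, y)) = frag_of (p * x, q * y)"
  by (simp add: tmult_def)

lemma tmult_diff_left: "tmult (u - v) w = tmult u w - tmult v w"
  by (simp add: tmult_def frag_extend_diff)

lemma tmult_diff_right: "tmult w (u - v) = tmult w u - tmult w v"
  by (simp add: tmult_def frag_extend_diff case_prod_unfold frag_extend_fun_diff)

lemma tmult_frag_of_right:
  "tmult w (frag_of (x, y)) = frag_extend (\<lambda>z. frag_of (fst z * x, snd z * y)) w"
  by (simp add: tmult_def case_prod_unfold)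

lemma tmult_tmap_frag_of:
  "tmult (tmap f w) (frag_of (x, y)) = frag_extend (\<lambda>z. frag_of (fst (f z) * x, snd (f z) * y)) w"
  unfolding tmap_def tmult_def case_prod_unfold
  by (simp add: frag_extend_compose[unfolded comp_def])

lemma keys_tmult:
  "Poly_Mapping.keys (tmult w v) \<subseteq>
     {(fst z * fst z', snd z * snd z') | z z'. z \<in> Poly_Mapping.keys w \<and> z' \<in> Poly_Mapping.keys v}"
  unfolding tmult_def case_prod_unfold
  by (rule order_trans[OF keys_frag_extend]) (use keys_frag_extend in fastforce)

lemma keys_tmult_subset_ideal_pairs:
  assumes I: "left_ideal I" and v: "Poly_Mapping.keys v \<subseteq> I \<times> UNIV \<union> UNIV \<times> I"
  shows "Poly_Mapping.keys (tmult w v) \<subseteq> I \<times> UNIV \<union> UNIV \<times> I"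
proof
  fix k assume "k \<in> Poly_Mapping.keys (tmult w v)"
  then obtain z z' where k: "k = (fst z * fst z', snd z * snd z')" and z': "z' \<in> Poly_Mapping.keys v"
    using keys_tmult[of w v] by blast
  have "fst z' \<in> I \<or> snd z' \<in> I" using v z' by auto
  then show "k \<in> I \<times> UNIV \<union> UNIV \<times> I"
    using I unfolding left_ideal_def k by auto
qed

locale balanced_tensor =
  fixes s t :: "'a::ring_1 \<Rightarrow> 'h::ring_1"
begin

abbreviation tensor_eq :: "('h \<times> 'h \<Rightarrow>\<^sub>0 int) \<Rightarrow> ('h \<times> 'h \<Rightarrow>\<^sub>0 int) \<Rightarrow> bool" (infix "\<approx>" 50)
  where "u \<approx> v \<equiv> tens2_eq s t UNIV UNIV u v"

lemma tensor_eq_iff: "u \<approx> v \<longleftrightarrow> u - v \<in> addgen (tens2_rels s t UNIV UNIV)"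
  by (simp add: tens2_eq_def)

lemma tensor_eq_refl [simp]: "u \<approx> u"
  by (simp add: tensor_eq_iff addgen.zero)

lemma tensor_eq_sym: "u \<approx> v \<Longrightarrow> v \<approx> u"
  using addgen_uminus by (fastforce simp: tensor_eq_iff)

lemma tensor_eq_trans [trans]: "u \<approx> v \<Longrightarrow> v \<approx> w \<Longrightarrow> u \<approx> w"
  using addgen_add[of "u - v" _ "v - w"] by (simp add: tensor_eq_iff)

lemma tensor_eq_add:
  assumes "u \<approx> u'" and "v \<approx> v'"
  shows "u + v \<approx> u' + v'"
proof -
  have "u + v - (u' + v') = (u - u') + (v - v')"
    by (simp add: algebra_simps)
  then show ?thesis
    using assms addgen_add unfolding tensor_eq_iff by metis
qed

lemma tensor_eq_sum:
  "(\<And>i. i \<in> I \<Longrightarrow> f i \<approx> g i) \<Longrightarrow> (\<Sum>i\<in>I. f i) \<approx> (\<Sum>i\<in>I. g i)"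
  by (induction I rule: infinite_finite_induct) (simp_all add: tensor_eq_add)

lemma tensor_eq_frag_extend:
  "(\<And>z. f z \<approx> g z) \<Longrightarrow> frag_extend f u \<approx> frag_extend g u"
  unfolding tensor_eq_iff frag_extend_fun_diff[symmetric]
  using subset_UNIV
  by (induction u rule: frag_induction) (auto simp: frag_extend_diff intro: addgen.zero addgen.diff)

lemma frag_of_add_left: "frag_of (x + x', y) \<approx> frag_of (x, y) + frag_of (x', y)"
  unfolding tensor_eq_iff diff_diff_eq[symmetric]
  by (rule addgen.gen) (unfold tens2_rels_def, blast)

lemma frag_of_add_right: "frag_of (x, y + y') \<approx> frag_of (x, y) + frag_of (x, y')"
  unfolding tensor_eq_iff diff_diff_eq[symmetric]
  by (rule addgen.gen) (unfold tens2_rels_def, blast)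

lemma frag_of_balanced: "frag_of (t a * x, y) \<approx> frag_of (x, s a * y)"
  unfolding tensor_eq_iff by (rule addgen.gen) (unfold tens2_rels_def, blast)

lemma tensor_eq_iff_diff: "u \<approx> v \<longleftrightarrow> u - v \<approx> 0"
  by (simp add: tensor_eq_iff)

lemma tensor_eq_diff:
  assumes "u \<approx> u'" and "v \<approx> v'"
  shows "u - v \<approx> u' - v'"
proof -
  have "u - v - (u' - v') = (u - u') - (v - v')"
    by (simp add: algebra_simps)
  then show ?thesis
    using assms addgen.diff unfolding tensor_eq_iff by metis
qed

lemma frag_of_diff_right: "frag_of (x, y - y') \<approx> frag_of (x, y) - frag_of (x, y')"
proof -
  have "frag_of (x, y) - frag_of (x, y') \<approx> (frag_of (x, y - y') + frag_of (x, y')) - frag_of (x, y')"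
    using frag_of_add_right[of x "y - y'" y'] by (intro tensor_eq_diff) simp_all
  then show ?thesis
    by (simp add: tensor_eq_sym)
qed

lemma tensor_eq_map:
  assumes diff: "\<And>u v. \<phi> (u - v) = \<phi> u - \<phi> v"
    and add_left: "\<And>x x' y. \<phi> (frag_of (x + x', y)) \<approx> \<phi> (frag_of (x, y)) + \<phi> (frag_of (x', y))"
    and add_right: "\<And>x y y'. \<phi> (frag_of (x, y + y')) \<approx> \<phi> (frag_of (x, y)) + \<phi> (frag_of (x, y'))"
    and balanced: "\<And>a x y. \<phi> (frag_of (t a * x, y)) \<approx> \<phi> (frag_of (x, s a * y))"
    and "u \<approx> v"
  shows "\<phi> u \<approx> \<phi> v"
proof -
  have "\<phi> r \<approx> 0" if "r \<in> addgen (tens2_rels s t UNIV UNIV)" for r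
    using that
  proof induction
    case zero
    show ?case using diff[of 0 0] by simp
  next
    case (gen r)
    then consider x x' y where "r = frag_of (x + x', y) - frag_of (x, y) - frag_of (x', y)"
      | x y y' where "r = frag_of (x, y + y') - frag_of (x, y) - frag_of (x, y')"
      | a x y where "r = frag_of (t a * x, y) - frag_of (x, s a * y)"
      unfolding tens2_rels_def by blast
    then show ?case
    proof cases
      case (1 x x' y)
      show ?thesis
        using add_left[of x x' y] unfolding 1 diff unfolding diff_diff_eq by (subst (asm) tensor_eq_iff_diff)
    next
      case (2 x y y')
      show ?thesis
        using add_right[of x y y'] unfolding 2 diff unfolding diff_diff_eq by (subst (asm) tensor_eq_iff_diff)
    next
      case (3 a x y)
      show ?thesis
        using balanced[of a x y] unfolding 3 diff by (subst (asm) tensor_eq_iff_diff)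
    qed
  next
    case (diff u v)
    then show ?case using tensor_eq_diff by (fastforce simp: assms(1))
  qed
  from this[of "u - v"] \<open>u \<approx> v\<close> have "\<phi> u - \<phi> v \<approx> 0"
    by (simp add: tensor_eq_iff diff)
  then show ?thesis
    by (subst tensor_eq_iff_diff)
qed

lemma fsum_tensor_eq:
  assumes add_left: "\<And>x x' y. g (x + x', y) = g (x, y) + g (x', y)"
    and add_right: "\<And>x y y'. g (x, y + y') = g (x, y) + g (x, y')"
    and balanced: "\<And>a x y. g (t a * x, y) = g (x, s a * y)"
    and "u \<approx> v"
  shows "fsum g u = fsum g v"
proof -
  have "fsum g r = 0" if "r \<in> addgen (tens2_rels s t UNIV UNIV)" for r
    using that
    by induction (auto simp: tens2_rels_def fsum_diff assms)
  from this[of "u - v"] \<open>u \<approx> v\<close> show ?thesis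
    by (simp add: tensor_eq_iff fsum_diff)
qed

lemma frag_extend_frag_of_right: "frag_extend (\<lambda>z. frag_of (p, f z)) w \<approx> frag_of (p, fsum f w)"
  using subset_UNIV
proof (induction w rule: frag_induction)
  case zero
  show ?case using frag_of_diff_right[of p 0 0] by (simp add: tensor_eq_sym)
next
  case (diff u v)
  then show ?case
    by (simp add: frag_extend_diff fsum_diff)
       (meson frag_of_diff_right tensor_eq_diff tensor_eq_sym tensor_eq_trans)
qed simp

lemma tensor_eq_split_left:
  "w \<approx> frag_extend (\<lambda>(x, y). frag_of (x - t (e x), y)) w + frag_of (1, fsum (\<lambda>(x, y). s (e x) * y) w)"
proof -
  let ?F = "\<lambda>(x, y). frag_of (x - t (e x), y)"
  have split: "frag_of z \<approx> ?F z + frag_of (1, (\<lambda>(x, y). s (e x) * y) z)" for z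
  proof (cases z)
    case (Pair x y)
    have "frag_of z = frag_of ((x - t (e x)) + t (e x) * 1, y)"
      by (simp add: Pair)
    also have "\<dots> \<approx> frag_of (x - t (e x), y) + frag_of (t (e x) * 1, y)"
      by (rule frag_of_add_left)
    also have "\<dots> \<approx> frag_of (x - t (e x), y) + frag_of (1, s (e x) * y)"
      by (intro tensor_eq_add tensor_eq_refl frag_of_balanced)
    finally show ?thesis by (simp add: Pair)
  qed
  have "w = frag_extend frag_of w"
    by (rule frag_expansion)
  also have "\<dots> \<approx> frag_extend ?F w + frag_extend (\<lambda>z. frag_of (1, (\<lambda>(x, y). s (e x) * y) z)) w"
    unfolding frag_extend_fun_add[symmetric] by (rule tensor_eq_frag_extend[OF split])
  also have "\<dots> \<approx> frag_extend ?F w + frag_of (1, fsum (\<lambda>(x, y). s (e x) * y) w)"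
    by (intro tensor_eq_add tensor_eq_refl frag_extend_frag_of_right)
  finally show ?thesis .
qed

definition in_takeuchi :: "('h \<times> 'h \<Rightarrow>\<^sub>0 int) \<Rightarrow> bool" where
  "in_takeuchi w \<longleftrightarrow> (\<forall>a. tmap (\<lambda>(x, y). (x * t a, y)) w \<approx> tmap (\<lambda>(x, y). (x, y * s a)) w)"

lemma tmult_tensor_eq_left: "u \<approx> v \<Longrightarrow> tmult u (frag_of (p, q)) \<approx> tmult v (frag_of (p, q))"
  by (erule tensor_eq_map[rotated 4])
     (simp_all add: tmult_diff_left distrib_right mult.assoc frag_of_add_left frag_of_add_right
       frag_of_balanced)

lemma tmult_tensor_eq_right:
  assumes w: "in_takeuchi w" and "u \<approx> v"
  shows "tmult w u \<approx> tmult w v"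
  using \<open>u \<approx> v\<close>
proof (rule tensor_eq_map[rotated 4])
  fix x x' y
  show "tmult w (frag_of (x + x', y)) \<approx> tmult w (frag_of (x, y)) + tmult w (frag_of (x', y))"
    unfolding tmult_def case_prod_unfold frag_extend_fun_add[symmetric]
    by (intro tensor_eq_frag_extend) (simp add: distrib_left frag_of_add_left)
next
  fix x y y'
  show "tmult w (frag_of (x, y + y')) \<approx> tmult w (frag_of (x, y)) + tmult w (frag_of (x, y'))"
    unfolding tmult_def case_prod_unfold frag_extend_fun_add[symmetric]
    by (intro tensor_eq_frag_extend) (simp add: distrib_left frag_of_add_right)
next
  fix a x y
  have "tmult w (frag_of (t a * x, y)) = tmult (tmap (\<lambda>(p, q). (p * t a, q)) w) (frag_of (x, y))"
    by (simp only: tmult_tmap_frag_of) (simp add: tmult_frag_of_right case_prod_unfold mult.assoc)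
  also have "\<dots> \<approx> tmult (tmap (\<lambda>(p, q). (p, q * s a)) w) (frag_of (x, y))"
    using w unfolding in_takeuchi_def by (blast intro: tmult_tensor_eq_left)
  also have "\<dots> = tmult w (frag_of (x, s a * y))"
    by (simp only: tmult_tmap_frag_of) (simp add: tmult_frag_of_right case_prod_unfold mult.assoc)
  finally show "tmult w (frag_of (t a * x, y)) \<approx> tmult w (frag_of (x, s a * y))" .
qed (rule tmult_diff_right)

end

lemma left_genI:
  "(\<And>i. i < n \<Longrightarrow> b i \<in> X) \<Longrightarrow> x = (\<Sum>i<(n::nat). h i * b i) \<Longrightarrow> x \<in> left_gen X"
  unfolding left_gen_def by blast

lemma left_genE:
  assumes "x \<in> left_gen X"
  obtains n b h where "\<And>i. i < n \<Longrightarrow> b i \<in> X" and "x = (\<Sum>i<(n::nat). h i * b i)"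
  using assms unfolding left_gen_def by blast

lemma left_gen_base: "x \<in> X \<Longrightarrow> x \<in> left_gen X"
  by (rule left_genI[of "Suc 0" "\<lambda>_. x" X x "\<lambda>_. 1"]) simp_all

lemma left_gen_mono: "X \<subseteq> Y \<Longrightarrow> left_gen X \<subseteq> left_gen Y"
  unfolding left_gen_def by blast

lemma left_gen_mult: "x \<in> left_gen X \<Longrightarrow> h * x \<in> left_gen X"
  by (elim left_genE, rule left_genI[where h = "\<lambda>i. h * _ i"])
     (simp_all add: sum_distrib_left mult.assoc)

lemma left_gen_add_term: "x \<in> left_gen X \<Longrightarrow> b \<in> X \<Longrightarrow> x + h * b \<in> left_gen X"
proof (elim left_genE)
  fix n :: nat and bs hs
  assume "\<And>i. i < n \<Longrightarrow> bs i \<in> X" and "b \<in> X" and x: "x = (\<Sum>i<n. hs i * bs i)"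
  then show "x + h * b \<in> left_gen X"
    by (intro left_genI[of "Suc n" "bs(n := b)" _ _ "hs(n := h)"]) (auto simp: x less_Suc_eq)
qed

lemma left_gen_add: "x \<in> left_gen X \<Longrightarrow> y \<in> left_gen X \<Longrightarrow> x + y \<in> left_gen X"
proof (erule left_genE[of y])
  fix n :: nat and b h
  assume x: "x \<in> left_gen X" and b: "\<And>i. i < n \<Longrightarrow> b i \<in> X" and y: "y = (\<Sum>i<n. h i * b i)"
  have "x + (\<Sum>i<m. h i * b i) \<in> left_gen X" if "m \<le> n" for m
    using that
  proof (induction m)
    case (Suc m)
    then have "x + (\<Sum>i<m. h i * b i) + h m * b m \<in> left_gen X"
      by (intro left_gen_add_term b) simp_all
    then show ?case
      by (simp add: add.assoc)
  qed (simp add: x)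
  then show "x + y \<in> left_gen X"
    by (simp add: y)
qed

lemma left_ideal_left_gen: "left_ideal (left_gen X)"
proof -
  have "x - y \<in> left_gen X" if "x \<in> left_gen X" and "y \<in> left_gen X" for x y
    using left_gen_add[OF that(1) left_gen_mult[OF that(2), of "- 1"]] by simp
  moreover have "0 \<in> left_gen X"
    by (rule left_genI[of 0]) simp_all
  ultimately show ?thesis
    unfolding left_ideal_def by (blast intro: left_gen_add left_gen_mult)
qed

locale bialgebroid = balanced_tensor s t
  for s t :: "'a::ring_1 \<Rightarrow> 'h::ring_1" +
  fixes eA :: "'k::field \<Rightarrow> 'a" and eH :: "'k \<Rightarrow> 'h"
    and \<Delta> :: "'h \<Rightarrow> ('h \<times> 'h \<Rightarrow>\<^sub>0 int)" and \<epsilon> :: "'h \<Rightarrow> 'a"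
  assumes left_bialgebroid: "left_bialgebroid eA eH s t \<Delta> \<epsilon>"
begin

lemma s_one: "s 1 = 1"
  and s_add: "s (a + b) = s a + s b"
  and s_mult: "s (a * b) = s a * s b"
  and t_add: "t (a + b) = t a + t b"
  using left_bialgebroid by (simp_all add: left_bialgebroid_def alg_map_def alg_map_op_def)

lemma eps_s_t_mult: "\<epsilon> (s a * t b * x) = a * \<epsilon> x * b"
  using left_bialgebroid unfolding left_bialgebroid_def by blast

lemma eps_add: "\<epsilon> (x + y) = \<epsilon> x + \<epsilon> y"
  and eps_mult_t_eps: "\<epsilon> (x * y) = \<epsilon> (x * t (\<epsilon> y))"
  and eps_one: "\<epsilon> 1 = 1"
  using left_bialgebroid by (simp_all add: left_bialgebroid_def)

lemma counit_left: "fsum (\<lambda>(x, y). s (\<epsilon> x) * y) (\<Delta> h) = h"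
  using left_bialgebroid by (simp add: left_bialgebroid_def)

lemma Delta_add: "\<Delta> (x + y) \<approx> \<Delta> x + \<Delta> y"
  and Delta_mult: "\<Delta> (x * y) \<approx> tmult (\<Delta> x) (\<Delta> y)"
  and Delta_in_takeuchi: "in_takeuchi (\<Delta> h)"
  using left_bialgebroid by (simp_all add: left_bialgebroid_def in_takeuchi_def)

lemma t_zero: "t 0 = 0"
  using t_add[of 0 0] by simp

lemma eps_zero: "\<epsilon> 0 = 0"
  using eps_add[of 0 0] by simp

lemma eps_diff: "\<epsilon> (x - y) = \<epsilon> x - \<epsilon> y"
  using eps_add[of "x - y" y] by simp

lemma eps_sum: "\<epsilon> (\<Sum>i\<in>I. f i) = (\<Sum>i\<in>I. \<epsilon> (f i))"
  using sum_comp_morphism[of \<epsilon> f I, OF eps_zero eps_add] by simp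

lemma eps_t: "\<epsilon> (t c) = c"
  using eps_s_t_mult[of 1 c 1] by (simp add: s_one eps_one)

lemma eps_t_mult: "\<epsilon> (t a * x) = \<epsilon> x * a"
  using eps_s_t_mult[of 1 a x] by (simp add: s_one)

lemma eps_mult_eq_0: "\<epsilon> y = 0 \<Longrightarrow> \<epsilon> (x * y) = 0"
  by (simp add: eps_mult_t_eps[of x y] t_zero eps_zero)

lemma Delta_zero: "\<Delta> 0 \<approx> 0"
  using Delta_add[of 0 0] addgen_uminus by (fastforce simp: tensor_eq_iff)

lemma Delta_sum: "\<Delta> (\<Sum>i\<in>I. f i) \<approx> (\<Sum>i\<in>I. \<Delta> (f i))"
proof (induction I rule: infinite_finite_induct)
  case (insert i I)
  have "\<Delta> (f i + (\<Sum>i\<in>I. f i)) \<approx> \<Delta> (f i) + \<Delta> (\<Sum>i\<in>I. f i)"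
    by (rule Delta_add)
  also have "\<dots> \<approx> \<Delta> (f i) + (\<Sum>i\<in>I. \<Delta> (f i))"
    by (intro tensor_eq_add tensor_eq_refl insert.IH)
  finally show ?case
    using insert.hyps by simp
qed (simp_all add: Delta_zero)

lemma fsum_counit_tensor_eq:
  "u \<approx> v \<Longrightarrow> fsum (\<lambda>(x, y). s (\<epsilon> x) * y) u = fsum (\<lambda>(x, y). s (\<epsilon> x) * y) v"
  by (rule fsum_tensor_eq) (simp_all add: eps_add s_add eps_t_mult s_mult algebra_simps)

lemma Delta_split_counit:
  assumes "w \<approx> \<Delta> b"
  shows "\<Delta> b \<approx> frag_extend (\<lambda>(x, y). frag_of (x - t (\<epsilon> x), y)) w + frag_of (1, b)"
proof -
  have "fsum (\<lambda>(x, y). s (\<epsilon> x) * y) w = b"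
    using fsum_counit_tensor_eq[OF assms] by (simp add: counit_left)
  then show ?thesis
    using tensor_eq_trans[OF tensor_eq_sym[OF assms] tensor_eq_split_left[of w \<epsilon>]] by simp
qed

lemma eps_left_gen: "(\<And>b. b \<in> X \<Longrightarrow> \<epsilon> b = 0) \<Longrightarrow> x \<in> left_gen X \<Longrightarrow> \<epsilon> x = 0"
  by (elim left_genE) (simp add: eps_sum eps_mult_eq_0)

lemma Delta_left_gen:
  assumes Delta_X: "\<And>b. b \<in> X \<Longrightarrow> \<exists>v. Poly_Mapping.keys v \<subseteq> X \<times> UNIV \<union> UNIV \<times> X \<and> \<Delta> b \<approx> v"
    and "x \<in> left_gen X"
  shows "\<exists>v. Poly_Mapping.keys v \<subseteq> left_gen X \<times> UNIV \<union> UNIV \<times> left_gen X \<and> \<Delta> x \<approx> v"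
proof -
  obtain n :: nat and b h where b: "\<And>i. i < n \<Longrightarrow> b i \<in> X" and x: "x = (\<Sum>i<n. h i * b i)"
    using \<open>x \<in> left_gen X\<close> by (elim left_genE) blast
  have "\<forall>i\<in>{..<n}. \<exists>v. Poly_Mapping.keys v \<subseteq> X \<times> UNIV \<union> UNIV \<times> X \<and> \<Delta> (b i) \<approx> v"
    by (simp add: Delta_X b)
  from bchoice[OF this] obtain V
    where V: "\<forall>i\<in>{..<n}. Poly_Mapping.keys (V i) \<subseteq> X \<times> UNIV \<union> UNIV \<times> X \<and> \<Delta> (b i) \<approx> V i"
    by blast
  define v where "v = (\<Sum>i<n. tmult (\<Delta> (h i)) (V i))"
  have "\<Delta> x \<approx> (\<Sum>i<n. \<Delta> (h i * b i))"
    unfolding x by (rule Delta_sum)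
  also have "\<dots> \<approx> (\<Sum>i<n. tmult (\<Delta> (h i)) (\<Delta> (b i)))"
    by (intro tensor_eq_sum Delta_mult)
  also have "\<dots> \<approx> v"
    unfolding v_def using V by (intro tensor_eq_sum tmult_tensor_eq_right Delta_in_takeuchi) simp
  finally have "\<Delta> x \<approx> v" .
  moreover have "Poly_Mapping.keys v \<subseteq> left_gen X \<times> UNIV \<union> UNIV \<times> left_gen X"
  proof -
    have "X \<times> UNIV \<union> UNIV \<times> X \<subseteq> left_gen X \<times> UNIV \<union> UNIV \<times> left_gen X"
      using left_gen_base by blast
    with V have "Poly_Mapping.keys (tmult (\<Delta> (h i)) (V i)) \<subseteq> left_gen X \<times> UNIV \<union> UNIV \<times> left_gen X"
      if "i \<in> {..<n}" for i
      using that by (intro keys_tmult_subset_ideal_pairs left_ideal_left_gen) auto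
    then show ?thesis
      unfolding v_def by (rule order_trans[OF keys_sum UN_least])
  qed
  ultimately show ?thesis
    by blast
qed

lemma left_gen_coideal:
  assumes "\<And>b. b \<in> X \<Longrightarrow> \<epsilon> b = 0"
    and "\<And>b. b \<in> X \<Longrightarrow> \<exists>v. Poly_Mapping.keys v \<subseteq> X \<times> UNIV \<union> UNIV \<times> X \<and> \<Delta> b \<approx> v"
  shows "left_ideal_two_sided_coideal s t \<Delta> \<epsilon> (left_gen X)"
  unfolding left_ideal_two_sided_coideal_def
proof (intro conjI ballI left_ideal_left_gen)
  fix x assume "x \<in> left_gen X"
  with assms(1) show "\<epsilon> x = 0"
    by (rule eps_left_gen)
  show "\<exists>v. Poly_Mapping.keys v \<subseteq> left_gen X \<times> UNIV \<union> UNIV \<times> left_gen X \<and> \<Delta> x \<approx> v"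
    by (rule Delta_left_gen[OF assms(2) \<open>x \<in> left_gen X\<close>])
qed

lemma comodule_subring_Delta_plus_part:
  assumes B: "right_comodule_subring eH s t \<Delta> \<epsilon> B" and b: "b \<in> plus_part \<epsilon> B"
  shows "\<exists>v. Poly_Mapping.keys v \<subseteq> plus_part \<epsilon> B \<times> UNIV \<union> UNIV \<times> plus_part \<epsilon> B \<and> \<Delta> b \<approx> v"
proof -
  have "b \<in> B"
    using b by (simp add: plus_part_def)
  obtain \<delta> where "\<forall>b\<in>B. Poly_Mapping.keys (\<delta> b) \<subseteq> B \<times> UNIV" and "\<forall>b\<in>B. \<delta> b \<approx> \<Delta> b"
    using B unfolding right_comodule_subring_def by (elim conjE exE) blast
  with \<open>b \<in> B\<close> have \<delta>_keys: "Poly_Mapping.keys (\<delta> b) \<subseteq> B \<times> UNIV" and \<delta>_Delta: "\<delta> b \<approx> \<Delta> b"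
    by blast+
  have t_B: "t c \<in> B" for c
    using B unfolding right_comodule_subring_def by (elim conjE) blast
  have B_diff: "x - y \<in> B" if "x \<in> B" and "y \<in> B" for x y
    using B that unfolding right_comodule_subring_def k_subalgebra_def by (elim conjE) blast
  define F :: "'h \<times> 'h \<Rightarrow> ('h \<times> 'h \<Rightarrow>\<^sub>0 int)"
    where "F = (\<lambda>(x, y). frag_of (x - t (\<epsilon> x), y))"
  have "Poly_Mapping.keys (F z) \<subseteq> plus_part \<epsilon> B \<times> UNIV" if "z \<in> Poly_Mapping.keys (\<delta> b)" for z
  proof (cases z)
    case (Pair x y)
    with that \<delta>_keys have "x \<in> B"
      by auto
    then have "x - t (\<epsilon> x) \<in> plus_part \<epsilon> B"
      using B_diff t_B by (simp add: plus_part_def eps_diff eps_t)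
    then show ?thesis
      by (simp add: Pair F_def)
  qed
  then have "Poly_Mapping.keys (frag_extend F (\<delta> b)) \<subseteq> plus_part \<epsilon> B \<times> UNIV"
    by (rule order_trans[OF keys_frag_extend UN_least])
  moreover have "Poly_Mapping.keys (frag_of (1, b)) \<subseteq> UNIV \<times> plus_part \<epsilon> B"
    using b by simp
  ultimately have "Poly_Mapping.keys (frag_extend F (\<delta> b) + frag_of (1, b))
      \<subseteq> plus_part \<epsilon> B \<times> UNIV \<union> UNIV \<times> plus_part \<epsilon> B"
    using keys_add[of "frag_extend F (\<delta> b)" "frag_of (1, b)"] by blast
  moreover have "\<Delta> b \<approx> frag_extend F (\<delta> b) + frag_of (1, b)"
    unfolding F_def by (rule Delta_split_counit[OF \<delta>_Delta])
  ultimately show ?thesis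
    by blast
qed

end

theorem proposition2p6:
  fixes eA :: "'k::field \<Rightarrow> 'a::ring_1" and eH :: "'k \<Rightarrow> 'h::ring_1"
    and s t :: "'a \<Rightarrow> 'h" and \<Delta> :: "'h \<Rightarrow> ('h \<times> 'h \<Rightarrow>\<^sub>0 int)" and \<epsilon> :: "'h \<Rightarrow> 'a"
  assumes "left_bialgebroid eA eH s t \<Delta> \<epsilon>"
  shows "(\<forall>B. right_comodule_subring eH s t \<Delta> \<epsilon> B \<longrightarrow>
             left_ideal_two_sided_coideal s t \<Delta> \<epsilon> (left_gen (plus_part \<epsilon> B)))
       \<and> (\<forall>B B'. right_comodule_subring eH s t \<Delta> \<epsilon> B \<and> right_comodule_subring eH s t \<Delta> \<epsilon> B'
             \<and> B \<subseteq> B' \<longrightarrow> left_gen (plus_part \<epsilon> B) \<subseteq> left_gen (plus_part \<epsilon> B'))"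
proof (intro conjI allI impI)
  interpret bialgebroid s t eA eH \<Delta> \<epsilon>
    using assms by unfold_locales
  fix B assume "right_comodule_subring eH s t \<Delta> \<epsilon> B"
  then show "left_ideal_two_sided_coideal s t \<Delta> \<epsilon> (left_gen (plus_part \<epsilon> B))"
    by (intro left_gen_coideal comodule_subring_Delta_plus_part) (simp_all add: plus_part_def)
next
  fix B B' :: "'h set"
  assume "right_comodule_subring eH s t \<Delta> \<epsilon> B \<and> right_comodule_subring eH s t \<Delta> \<epsilon> B' \<and> B \<subseteq> B'"
  then show "left_gen (plus_part \<epsilon> B) \<subseteq> left_gen (plus_part \<epsilon> B')"
    by (intro left_gen_mono) (auto simp: plus_part_def)
qed

end
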